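(* Let $\mathcal{F}\subseteq\mathcal{P}(\omega)$ be a free filter, let $h\colon Q\to Q$ be a homeomorphism of $Q=[-1,1]^\omega$, and let $D\subseteq(-1,1)^\omega$ be countable and dense in $Q$. Assume there is $z\in C_\mathcal{F}$ such that for every $d\in D$ and $n\in\omega$, $|(d-h(d))(n)|\le|z(n)|$. Then $h[K_\mathcal{F}]=K_\mathcal{F}$.
   Context: A filter on $\omega$ is free if it contains all cofinite sets. $Q=[-1,1]^\omega$ has the product topology, $Q^\circ=(-1,1)^\omega$. $K_\mathcal{F}=\{f\in Q:\forall m\in\omega\ \{n\in\omega:|f(n)|<2^{-m}\}\in\mathcal{F}\}$ and $C_\mathcal{F}=K_\mathcal{F}\cap Q^\circ$. Differences are coordinatewise. *)

theory Defs
  imports "HOL-Analysis.Analysis"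
begin

text \<open>The type nat \<Rightarrow> real carries the product topology (HOL-Analysis.Function_Topology).\<close>

definition Qcube :: "(nat \<Rightarrow> real) set" where
  "Qcube = {f. \<forall>n. \<bar>f n\<bar> \<le> 1}"

definition Qopen :: "(nat \<Rightarrow> real) set" where
  "Qopen = {f. \<forall>n. \<bar>f n\<bar> < 1}"

definition is_filter_on_nat :: "nat set set \<Rightarrow> bool" where
  "is_filter_on_nat F \<longleftrightarrow> UNIV \<in> F \<and> {} \<notin> F \<and>
     (\<forall>A B. A \<in> F \<longrightarrow> B \<in> F \<longrightarrow> A \<inter> B \<in> F) \<and>
     (\<forall>A B. A \<in> F \<longrightarrow> A \<subseteq> B \<longrightarrow> B \<in> F)"

definition free_filter :: "nat set set \<Rightarrow> bool" where
  "free_filter F \<longleftrightarrow> is_filter_on_nat F \<and> (\<forall>A. finite (UNIV - A) \<longrightarrow> A \<in> F)"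

definition K_F :: "nat set set \<Rightarrow> (nat \<Rightarrow> real) set" where
  "K_F F = {f \<in> Qcube. \<forall>m::nat. {n. \<bar>f n\<bar> < (1/2) ^ m} \<in> F}"

definition C_F :: "nat set set \<Rightarrow> (nat \<Rightarrow> real) set" where
  "C_F F = K_F F \<inter> Qopen"

end

theory Submission
  imports Defs
begin

text \<open>By density and continuity the bound |x n - h x n| \<le> |z n| holds on all of Q, hence also
  for the inverse homeomorphism. So h and its inverse move every point coordinatewise by at
  most |z|, and since z is below every precision 2^-m on a filter set, both maps send K_F
  into itself.\<close>

lemma closed_Qcube: "closed Qcube"
  unfolding Qcube_def
  by (simp add: Collect_all_eq closed_INT closed_Collect_le continuous_on_rabs)

lemma closure_eq_Qcube:
  assumes "D \<subseteq> Qopen" and "Qcube \<subseteq> closure D"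
  shows "closure D = Qcube"
proof -
  have "D \<subseteq> Qcube"
    using assms(1) by (auto simp: Qopen_def Qcube_def less_imp_le)
  then have "closure D \<subseteq> Qcube"
    using closed_Qcube closure_minimal by blast
  with assms(2) show ?thesis by blast
qed

lemma displacement_bound_on_closure:
  fixes h :: "('i \<Rightarrow> real) \<Rightarrow> ('i \<Rightarrow> real)"
  assumes "continuous_on (closure D) h" and "x \<in> closure D"
    and "\<And>d. d \<in> D \<Longrightarrow> \<bar>d i - h d i\<bar> \<le> c"
  shows "\<bar>x i - h x i\<bar> \<le> c"
proof (rule continuous_le_on_closure[where f = "\<lambda>y. \<bar>y i - h y i\<bar>"])
  show "continuous_on (closure D) (\<lambda>y. \<bar>y i - h y i\<bar>)"
    using continuous_on_product_then_coordinatewise[OF continuous_on_id]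
      continuous_on_product_then_coordinatewise[OF assms(1)]
    by (intro continuous_on_rabs continuous_on_diff) simp_all
qed (use assms in auto)

lemma displacement_bound_inverse:
  fixes h g :: "('i \<Rightarrow> real) \<Rightarrow> ('i \<Rightarrow> real)"
  assumes "homeomorphism S S h g" and "\<And>x. x \<in> S \<Longrightarrow> \<bar>x i - h x i\<bar> \<le> c" and "y \<in> S"
  shows "\<bar>y i - g y i\<bar> \<le> c"
proof -
  have "g y \<in> S" and "h (g y) = y"
    using assms(1,3) by (auto simp: homeomorphism_def)
  with assms(2)[of "g y"] show ?thesis
    by (simp add: abs_minus_commute)
qed

lemma K_F_dominated_perturbation:
  assumes "is_filter_on_nat F" and "x \<in> K_F F" and "z \<in> K_F F" and "y \<in> Qcube"
    and "\<And>n. \<bar>x n - y n\<bar> \<le> \<bar>z n\<bar>"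
  shows "y \<in> K_F F"
proof -
  have "{n. \<bar>y n\<bar> < (1/2) ^ m} \<in> F" for m
  proof -
    let ?A = "{n. \<bar>x n\<bar> < (1/2) ^ Suc m}" and ?B = "{n. \<bar>z n\<bar> < (1/2) ^ Suc m}"
    have "?A \<in> F" and "?B \<in> F"
      using assms(2,3) unfolding K_F_def by blast+
    moreover have "?A \<inter> ?B \<subseteq> {n. \<bar>y n\<bar> < (1/2) ^ m}"
    proof
      fix n assume "n \<in> ?A \<inter> ?B"
      moreover have "(1/2::real) ^ Suc m + (1/2) ^ Suc m = (1/2) ^ m" by simp
      ultimately show "n \<in> {n. \<bar>y n\<bar> < (1/2) ^ m}"
        using assms(5)[of n] by auto
    qed
    ultimately show ?thesis
      using assms(1) unfolding is_filter_on_nat_def by blast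
  qed
  with assms(4) show ?thesis by (simp add: K_F_def)
qed

lemma homeomorphism_image_eq_if_invariant:
  assumes "homeomorphism S S h g" and "K \<subseteq> S" and "h ` K \<subseteq> K" and "g ` K \<subseteq> K"
  shows "h ` K = K"
proof
  show "K \<subseteq> h ` K"
  proof
    fix y assume "y \<in> K"
    then have "h (g y) = y"
      using assms(1,2) homeomorphism_apply2 by blast
    with \<open>y \<in> K\<close> assms(4) show "y \<in> h ` K" by (metis image_subset_iff rev_image_eqI)
  qed
qed (fact assms(3))

theorem mainTheorem11:
  fixes F :: "nat set set" and h :: "(nat \<Rightarrow> real) \<Rightarrow> (nat \<Rightarrow> real)"
    and D :: "(nat \<Rightarrow> real) set"
  assumes "free_filter F"
    and "\<exists>g. homeomorphism Qcube Qcube h g"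
    and "D \<subseteq> Qopen" and "countable D" and "Qcube \<subseteq> closure D"
    and "\<exists>z \<in> C_F F. \<forall>d \<in> D. \<forall>n. \<bar>(d - h d) n\<bar> \<le> \<bar>z n\<bar>"
  shows "h ` K_F F = K_F F"
proof -
  obtain g where hg: "homeomorphism Qcube Qcube h g" using assms(2) by blast
  obtain z where "z \<in> C_F F" and bound_D: "\<forall>d \<in> D. \<forall>n. \<bar>(d - h d) n\<bar> \<le> \<bar>z n\<bar>"
    using assms(6) by blast
  then have z: "z \<in> K_F F" by (simp add: C_F_def)
  have filter: "is_filter_on_nat F" using assms(1) by (simp add: free_filter_def)
  have closure_D: "closure D = Qcube" using closure_eq_Qcube[OF assms(3,5)] .
  have h_cont: "continuous_on (closure D) h"
    using hg closure_D by (simp add: homeomorphism_def)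
  have bound_h: "\<bar>x n - h x n\<bar> \<le> \<bar>z n\<bar>" if "x \<in> Qcube" for x n
    using displacement_bound_on_closure[OF h_cont] bound_D that closure_D by simp
  have bound_g: "\<bar>x n - g x n\<bar> \<le> \<bar>z n\<bar>" if "x \<in> Qcube" for x n
    using displacement_bound_inverse[OF hg bound_h that] .
  have K_sub: "K_F F \<subseteq> Qcube" by (auto simp: K_F_def)
  have "h ` K_F F \<subseteq> K_F F" and "g ` K_F F \<subseteq> K_F F"
    using K_F_dominated_perturbation[OF filter _ z] homeomorphism_image1[OF hg]
      homeomorphism_image2[OF hg] K_sub bound_h bound_g by blast+
  with hg K_sub show ?thesis by (rule homeomorphism_image_eq_if_invariant)
qed

end
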